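(* Let $G\subsetneq\mathbb{R}^N$ be an open set, $M>0$ and $1<q<p$. There exists $c_5=c_5(N,p,q)>0$ such that every nonnegative solution $u\in C^2(G)$ of $-\Delta u+u^p-M|\nabla u|^q=0$ in $G$ satisfies $$u(x)\le c_5\max\left\{M^{\frac{1}{p-q}}\,d_G(x)^{-\frac{q}{p-q}},\ d_G(x)^{-\frac{2}{p-1}}\right\}\quad\text{for all }x\in G,$$ where $d_G(x)=\mathrm{dist}(x,\partial G)$. *)

theory Defs
  imports "HOL-Analysis.Analysis"
begin

definition C2_on :: "'a::euclidean_space set \<Rightarrow> ('a \<Rightarrow> real) \<Rightarrow> bool" where
  "C2_on G u \<longleftrightarrow> (\<exists>Du :: 'a \<Rightarrow> ('a \<Rightarrow>\<^sub>L real). \<exists>D2u :: 'a \<Rightarrow> ('a \<Rightarrow>\<^sub>L ('a \<Rightarrow>\<^sub>L real)).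
      (\<forall>x\<in>G. (u has_derivative blinfun_apply (Du x)) (at x)) \<and>
      (\<forall>x\<in>G. (Du has_derivative blinfun_apply (D2u x)) (at x)) \<and>
      continuous_on G D2u)"

definition grad :: "('a::euclidean_space \<Rightarrow> real) \<Rightarrow> 'a \<Rightarrow> 'a" where
  "grad u x = (\<Sum>i\<in>Basis. frechet_derivative u (at x) i *\<^sub>R i)"

definition laplacian :: "('a::euclidean_space \<Rightarrow> real) \<Rightarrow> 'a \<Rightarrow> real" where
  "laplacian u x = (\<Sum>i\<in>Basis. frechet_derivative (\<lambda>y. frechet_derivative u (at y) i) (at x) i)"

definition dist_bd :: "'a::euclidean_space set \<Rightarrow> 'a \<Rightarrow> real" where
  "dist_bd G x = infdist x (frontier G)"

end

theory Submission
  imports Defs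
begin

(* Compare u on a ball B(x0, r) inside G with the explosive barrier
   w(y) = A (r^2 - |y - x0|^2)^(-beta), beta = max (2/(p-1)) (q/(p-q)).
   At an interior maximum z of u - w the first and second order conditions give
   grad u z = grad w z and laplacian u z <= laplacian w z; if A is so large that
   -laplacian w + w^p - M |grad w|^q > 0, the equation forces u z < w z, hence
   u x0 < w x0 = A r^(-2 beta).  Taking r = d_G(x0)/2, the least admissible
   A r^(-2 beta) is of the order of the right-hand side of the estimate. *)

lemma DERIV_local_max_second:
  fixes g g' :: "real \<Rightarrow> real"
  assumes e: "e > 0"
    and g': "\<And>t. \<bar>t\<bar> < e \<Longrightarrow> (g has_real_derivative g' t) (at t)"
    and g'': "(g' has_real_derivative g'') (at 0)"
    and max: "\<And>t. \<bar>t\<bar> < e \<Longrightarrow> g t \<le> g 0"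
  shows "g' 0 = 0" and "g'' \<le> 0"
proof -
  show g'0: "g' 0 = 0"
    by (rule DERIV_local_max[OF g'[of 0] e]) (use e max in auto)
  show "g'' \<le> 0"
  proof (rule ccontr)
    assume "\<not> g'' \<le> 0"
    then obtain d where d: "d > 0" "\<And>h. 0 < h \<Longrightarrow> h < d \<Longrightarrow> g' 0 < g' h"
      using DERIV_pos_inc_right[OF g''] by force
    define h where "h = min d e / 2"
    have h: "0 < h" "h < d" "h < e" using d e by (auto simp: h_def)
    obtain \<xi> where \<xi>: "0 < \<xi>" "\<xi> < h" "g h - g 0 = h * g' \<xi>"
      using MVT2[of 0 h g g'] h g' by force
    have "g' \<xi> > 0" using d(2)[of \<xi>] \<xi> h g'0 by simp
    with \<xi> h have "g h > g 0" by (simp add: algebra_simps)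
    with max[of h] h show False by simp
  qed
qed

lemma has_real_derivative_along_line:
  fixes f :: "'a::real_normed_vector \<Rightarrow> real"
  assumes "(f has_derivative f') (at (z + t *\<^sub>R e))"
  shows "((\<lambda>t. f (z + t *\<^sub>R e)) has_real_derivative f' e) (at t)"
proof -
  have "((\<lambda>t. z + t *\<^sub>R e) has_derivative (\<lambda>s. s *\<^sub>R e)) (at t)"
    by (auto intro!: derivative_eq_intros)
  from has_derivative_compose[OF this assms]
  have "((\<lambda>t. f (z + t *\<^sub>R e)) has_derivative (\<lambda>s. f' (s *\<^sub>R e))) (at t)" .
  moreover have "(\<lambda>s. f' (s *\<^sub>R e)) = (*) (f' e)"
    using linear_cmul[OF has_derivative_linear[OF assms]] by (auto simp: mult.commute)
  ultimately show ?thesis by (simp add: has_field_derivative_def)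
qed

lemma local_max_along_line:
  fixes u :: "'a::real_normed_vector \<Rightarrow> real" and Du :: "'a \<Rightarrow> ('a \<Rightarrow>\<^sub>L real)"
  assumes e: "\<epsilon> > 0"
    and Du: "\<And>t. \<bar>t\<bar> < \<epsilon> \<Longrightarrow> (u has_derivative blinfun_apply (Du (z + t *\<^sub>R e))) (at (z + t *\<^sub>R e))"
    and D2u: "(Du has_derivative blinfun_apply D2u) (at z)"
    and \<phi>': "\<And>t. \<bar>t\<bar> < \<epsilon> \<Longrightarrow> (\<phi> has_real_derivative \<phi>' t) (at t)"
    and \<phi>'': "(\<phi>' has_real_derivative \<phi>'') (at 0)"
    and max: "\<And>t. \<bar>t\<bar> < \<epsilon> \<Longrightarrow> u (z + t *\<^sub>R e) - \<phi> t \<le> u z - \<phi> 0"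
  shows "Du z e = \<phi>' 0" and "D2u e e \<le> \<phi>''"
proof -
  define g where "g t = u (z + t *\<^sub>R e) - \<phi> t" for t
  define g' where "g' t = Du (z + t *\<^sub>R e) e - \<phi>' t" for t
  have "((\<lambda>y. Du y e) has_derivative (\<lambda>v. D2u v e)) (at (z + 0 *\<^sub>R e))"
    using D2u by (auto intro!: derivative_eq_intros)
  from has_real_derivative_along_line[OF this]
  have g'': "(g' has_real_derivative D2u e e - \<phi>'') (at 0)"
    unfolding g'_def by (rule DERIV_diff[OF _ \<phi>''])
  have g': "(g has_real_derivative g' t) (at t)" if "\<bar>t\<bar> < \<epsilon>" for t
    unfolding g_def g'_def
    by (intro DERIV_diff has_real_derivative_along_line Du \<phi>' that)
  have gmax: "g t \<le> g 0" if "\<bar>t\<bar> < \<epsilon>" for t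
    using max[OF that] by (simp add: g_def)
  have "g' 0 = 0" "D2u e e - \<phi>'' \<le> 0"
    using DERIV_local_max_second[OF e g' g'' gmax] by blast+
  then show "Du z e = \<phi>' 0" and "D2u e e \<le> \<phi>''" by (auto simp: g'_def)
qed

lemma grad_eq_sum_partials:
  assumes "(u has_derivative u') (at x)"
  shows "grad u x = (\<Sum>i\<in>Basis. u' i *\<^sub>R i)"
  using frechet_derivative_at[OF assms] by (simp add: grad_def)

lemma laplacian_eq_trace:
  fixes u :: "'a::euclidean_space \<Rightarrow> real" and Du :: "'a \<Rightarrow> ('a \<Rightarrow>\<^sub>L real)"
  assumes G: "open G" "x \<in> G"
    and Du: "\<And>y. y \<in> G \<Longrightarrow> (u has_derivative blinfun_apply (Du y)) (at y)"
    and D2u: "(Du has_derivative blinfun_apply D2u) (at x)"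
  shows "laplacian u x = (\<Sum>i\<in>Basis. D2u i i)"
proof -
  have "frechet_derivative (\<lambda>y. frechet_derivative u (at y) i) (at x) i = D2u i i" for i
  proof -
    have "((\<lambda>y. Du y i) has_derivative (\<lambda>v. D2u v i)) (at x)"
      using D2u by (auto intro!: derivative_eq_intros)
    then have "((\<lambda>y. frechet_derivative u (at y) i) has_derivative (\<lambda>v. D2u v i)) (at x)"
      by (rule has_derivative_transform_within_open[OF _ G])
        (metis Du frechet_derivative_at)
    from frechet_derivative_at[OF this] show ?thesis by metis
  qed
  then show ?thesis by (simp add: laplacian_def)
qed

lemma norm_add_scaleR_unit_power2:
  fixes v e :: "'a::real_inner"
  assumes "norm e = 1"
  shows "norm (v + t *\<^sub>R e)^2 = norm v^2 + 2*t*(v \<bullet> e) + t^2"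
proof -
  have "norm (v + t *\<^sub>R e)^2 = v \<bullet> v + 2*t*(v \<bullet> e) + t^2*(e \<bullet> e)"
    unfolding power2_norm_eq_inner
    by (simp add: inner_add_left inner_add_right inner_commute power2_eq_square algebra_simps)
  with assms show ?thesis by (simp add: power2_norm_eq_inner norm_eq_1)
qed

definition barrier :: "real \<Rightarrow> real \<Rightarrow> 'a::real_inner \<Rightarrow> real \<Rightarrow> 'a \<Rightarrow> real" where
  "barrier A \<beta> x0 r y = A * (r^2 - norm (y - x0)^2) powr (-\<beta>)"

lemma barrier_along_line:
  fixes x0 z e :: "'a::real_inner"
  assumes "norm e = 1"
  shows "barrier A \<beta> x0 r (z + t *\<^sub>R e)
           = A * ((r^2 - norm (z - x0)^2) - 2*t*((z - x0) \<bullet> e) - t^2) powr (-\<beta>)"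
proof -
  have "(z - x0) + t *\<^sub>R e = z + t *\<^sub>R e - x0" by (simp add: algebra_simps)
  with norm_add_scaleR_unit_power2[OF assms, of "z - x0" t]
  have "r^2 - norm (z + t *\<^sub>R e - x0)^2 = (r^2 - norm (z - x0)^2) - 2*t*((z - x0) \<bullet> e) - t^2"
    by simp
  then show ?thesis by (simp only: barrier_def)
qed

lemma barrier_profile_has_derivative:
  fixes A \<beta> h a t :: real
  assumes "h - 2*t*a - t^2 > 0"
  shows "((\<lambda>t. A * (h - 2*t*a - t^2) powr (-\<beta>)) has_real_derivative
           2*A*\<beta>*(a + t)*(h - 2*t*a - t^2) powr (-\<beta>-1)) (at t)"
  by (rule derivative_eq_intros DERIV_fun_powr)+
    (use assms in \<open>auto intro!: derivative_eq_intros simp: algebra_simps\<close>)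

lemma barrier_profile_second_derivative:
  fixes A \<beta> h a :: real
  assumes "h > 0"
  shows "((\<lambda>t. 2*A*\<beta>*(a + t)*(h - 2*t*a - t^2) powr (-\<beta>-1)) has_real_derivative
           2*A*\<beta>*(h powr (-\<beta>-1) + 2*(\<beta>+1)*a^2*h powr (-\<beta>-2))) (at 0)"
proof -
  have "((\<lambda>t. 2*A*\<beta>*(a + t)*(h - 2*t*a - t^2) powr (-\<beta>-1)) has_real_derivative
      2*A*\<beta>*1*(h - 2*0*a - 0^2) powr (-\<beta>-1) + 2*A*\<beta>*(a + 0)
        * ((-\<beta>-1) * (h - 2*0*a - 0^2) powr (-\<beta>-1 - of_nat 1) * (-2*a - 2*0))) (at 0)"
    using assms by (intro derivative_eq_intros DERIV_fun_powr) (auto intro!: derivative_eq_intros)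
  then show ?thesis
    by (simp add: algebra_simps power2_eq_square)
qed

lemma derivatives_at_barrier_max:
  fixes u :: "'a::real_inner \<Rightarrow> real" and Du :: "'a \<Rightarrow> ('a \<Rightarrow>\<^sub>L real)"
  assumes z: "z \<in> ball x0 \<rho>" and \<rho>: "\<rho> \<le> r" and e: "norm e = 1"
    and Du: "\<And>y. y \<in> ball x0 \<rho> \<Longrightarrow> (u has_derivative blinfun_apply (Du y)) (at y)"
    and D2u: "(Du has_derivative blinfun_apply D2u) (at z)"
    and max: "\<And>y. y \<in> ball x0 \<rho> \<Longrightarrow> u y - barrier A \<beta> x0 r y \<le> u z - barrier A \<beta> x0 r z"
  defines "h \<equiv> r^2 - norm (z - x0)^2" and "a \<equiv> (z - x0) \<bullet> e"
  shows "Du z e = 2*A*\<beta>*a*h powr (-\<beta>-1)"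
    and "D2u e e \<le> 2*A*\<beta>*(h powr (-\<beta>-1) + 2*(\<beta>+1)*a^2*h powr (-\<beta>-2))"
proof -
  define \<epsilon> where "\<epsilon> = \<rho> - dist x0 z"
  have \<epsilon>: "\<epsilon> > 0" using z by (simp add: \<epsilon>_def)
  have line_in_ball: "z + t *\<^sub>R e \<in> ball x0 \<rho>" if "\<bar>t\<bar> < \<epsilon>" for t
  proof -
    have "dist x0 (z + t *\<^sub>R e) \<le> dist x0 z + dist z (z + t *\<^sub>R e)" by (rule dist_triangle)
    also have "dist z (z + t *\<^sub>R e) = \<bar>t\<bar>" using e by (simp add: dist_norm)
    finally show ?thesis using that by (simp add: \<epsilon>_def)
  qed
  have profile_pos: "h - 2*t*a - t^2 > 0" if "\<bar>t\<bar> < \<epsilon>" for t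
  proof -
    have "norm (z + t *\<^sub>R e - x0) < r"
      using line_in_ball[OF that] \<rho> by (simp add: dist_norm norm_minus_commute)
    then have "norm (z + t *\<^sub>R e - x0)^2 < r^2"
      by (simp add: power_strict_mono)
    then show ?thesis
      using norm_add_scaleR_unit_power2[OF e, of "z - x0" t] by (simp add: h_def a_def algebra_simps)
  qed
  have "0 < h" using profile_pos[of 0] \<epsilon> by simp
  have max_line: "u (z + t *\<^sub>R e) - A * (h - 2*t*a - t^2) powr (-\<beta>)
      \<le> u z - A * (h - 2*0*a - 0^2) powr (-\<beta>)" if "\<bar>t\<bar> < \<epsilon>" for t
    using max[OF line_in_ball[OF that]] barrier_along_line[OF e, of A \<beta> x0 r z t]
      barrier_along_line[OF e, of A \<beta> x0 r z 0]
    by (simp add: h_def a_def)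
  from local_max_along_line[OF \<epsilon> Du[OF line_in_ball] D2u
      barrier_profile_has_derivative[OF profile_pos]
      barrier_profile_second_derivative[OF \<open>0 < h\<close>] max_line]
  show "Du z e = 2*A*\<beta>*a*h powr (-\<beta>-1)"
    and "D2u e e \<le> 2*A*\<beta>*(h powr (-\<beta>-1) + 2*(\<beta>+1)*a^2*h powr (-\<beta>-2))"
    by simp_all
qed

text \<open>At distance \<open>r\<close> from \<open>x0\<close> the barrier is \<open>A * 0 powr (-\<beta>) = 0\<close>, not \<open>\<infinity>\<close>, so
  the maximum of \<open>u - w\<close> is taken over a smaller ball on whose sphere \<open>w\<close> is already large.\<close>

lemma barrier_large_near_sphere:
  fixes x0 :: "'a::real_inner"
  assumes "r > 0" "A > 0" "\<beta> > 0"
  obtains \<rho> where "0 < \<rho>" "\<rho> < r" "\<And>y. norm (y - x0) = \<rho> \<Longrightarrow> barrier A \<beta> x0 r y > Q"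
proof -
  define \<delta> where "\<delta> = min (r^2/2) ((\<bar>Q\<bar>/A + 1) powr (-1/\<beta>))"
  have Q: "\<bar>Q\<bar>/A + 1 > 0" using assms by (intro add_nonneg_pos) auto
  then have \<delta>: "0 < \<delta>" "\<delta> < r^2" using assms by (auto simp: \<delta>_def min_less_iff_disj)
  have "\<bar>Q\<bar>/A + 1 = ((\<bar>Q\<bar>/A + 1) powr (-1/\<beta>)) powr (-\<beta>)"
    using assms Q by (simp add: powr_powr)
  also have "\<dots> \<le> \<delta> powr (-\<beta>)"
    using assms \<delta> by (intro powr_mono2') (auto simp: \<delta>_def)
  finally have "\<bar>Q\<bar> + A \<le> A * \<delta> powr (-\<beta>)"
    using assms by (simp add: field_simps)
  then have "Q < A * \<delta> powr (-\<beta>)"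
    using assms by linarith
  define \<rho> where "\<rho> = sqrt (r^2 - \<delta>)"
  have "\<rho> < sqrt (r^2)" unfolding \<rho>_def using \<delta> by (intro real_sqrt_less_mono) auto
  then have "0 < \<rho>" "\<rho> < r" "r^2 - \<rho>^2 = \<delta>"
    using \<delta> assms by (auto simp: \<rho>_def)
  with \<open>Q < A * \<delta> powr (-\<beta>)\<close> show thesis
    by (intro that[of \<rho>]) (auto simp: barrier_def)
qed

lemma exists_interior_max_minus_barrier:
  fixes u :: "'a::euclidean_space \<Rightarrow> real"
  assumes u: "continuous_on (cball x0 r) u" "u x0 \<ge> 0"
    and r: "r > 0" and A: "A > 0" and \<beta>: "\<beta> > 0"
  obtains \<rho> z where "0 < \<rho>" "\<rho> < r" "z \<in> ball x0 \<rho>"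
    "\<And>y. y \<in> cball x0 \<rho> \<Longrightarrow> u y - barrier A \<beta> x0 r y \<le> u z - barrier A \<beta> x0 r z"
proof -
  let ?w = "barrier A \<beta> x0 r"
  obtain B where B: "\<And>y. y \<in> cball x0 r \<Longrightarrow> u y \<le> B"
    using continuous_attains_sup[OF compact_cball _ u(1)] r by force
  obtain \<rho> where \<rho>: "0 < \<rho>" "\<rho> < r" and sphere: "\<And>y. norm (y - x0) = \<rho> \<Longrightarrow> ?w y > B + ?w x0"
    using barrier_large_near_sphere[OF r A \<beta>] by blast
  have barrier_base_pos: "r^2 - norm (y - x0)^2 > 0" if "y \<in> cball x0 \<rho>" for y
  proof -
    have "norm (y - x0) < r" using that \<rho> by (simp add: dist_norm norm_minus_commute)
    then show ?thesis by (simp add: power_strict_mono)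
  qed
  have "continuous_on (cball x0 \<rho>) ?w"
    unfolding barrier_def by (intro continuous_intros) (use barrier_base_pos in force)
  moreover have "continuous_on (cball x0 \<rho>) u"
    using continuous_on_subset[OF u(1)] \<rho> by (simp add: subset_cball)
  ultimately have "continuous_on (cball x0 \<rho>) (\<lambda>y. u y - ?w y)"
    by (rule continuous_on_diff[rotated])
  moreover have "cball x0 \<rho> \<noteq> {}" using \<rho> by simp
  ultimately obtain z where z: "z \<in> cball x0 \<rho>"
    and zmax: "\<And>y. y \<in> cball x0 \<rho> \<Longrightarrow> u y - ?w y \<le> u z - ?w z"
    using continuous_attains_sup[OF compact_cball] by blast
  have "z \<in> ball x0 \<rho>"
  proof (rule ccontr)
    assume "z \<notin> ball x0 \<rho>"
    then have "?w z > B + ?w x0"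
      using z by (intro sphere) (simp add: dist_norm norm_minus_commute)
    moreover have "u z \<le> B" using B z \<rho> by auto
    moreover have "u x0 - ?w x0 \<le> u z - ?w z" using zmax \<rho> by simp
    ultimately show False using u(2) by simp
  qed
  with \<rho> show thesis using zmax by (rule that)
qed

lemma grad_laplacian_at_barrier_max:
  fixes u :: "'a::euclidean_space \<Rightarrow> real" and Du :: "'a \<Rightarrow> ('a \<Rightarrow>\<^sub>L real)"
    and D2u :: "'a \<Rightarrow> ('a \<Rightarrow>\<^sub>L ('a \<Rightarrow>\<^sub>L real))"
  assumes G: "open G" "ball x0 \<rho> \<subseteq> G" and z: "z \<in> ball x0 \<rho>" and \<rho>: "\<rho> \<le> r"
    and A: "A > 0" and \<beta>: "\<beta> > 0"
    and Du: "\<And>x. x \<in> G \<Longrightarrow> (u has_derivative blinfun_apply (Du x)) (at x)"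
    and D2u: "\<And>x. x \<in> G \<Longrightarrow> (Du has_derivative blinfun_apply (D2u x)) (at x)"
    and max: "\<And>y. y \<in> ball x0 \<rho> \<Longrightarrow> u y - barrier A \<beta> x0 r y \<le> u z - barrier A \<beta> x0 r z"
  defines "h \<equiv> r^2 - norm (z - x0)^2"
  shows "norm (grad u z) = 2*A*\<beta>*h powr (-\<beta>-1) * sqrt (r^2 - h)"
    and "laplacian u z
           \<le> 2*A*\<beta>*(real DIM('a) * h powr (-\<beta>-1) + 2*(\<beta>+1)*(r^2 - h)*h powr (-\<beta>-2))"
proof -
  have zG: "z \<in> G" using z G(2) by auto
  define k where "k = 2*A*\<beta>*h powr (-\<beta>-1)"
  have partials: "Du z e = k * ((z - x0) \<bullet> e)"
      "D2u z e e \<le> 2*A*\<beta>*(h powr (-\<beta>-1) + 2*(\<beta>+1)*((z - x0) \<bullet> e)^2*h powr (-\<beta>-2))"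
    if "e \<in> Basis" for e
    using derivatives_at_barrier_max[OF z \<rho> _ Du D2u[OF zG] max, of e] that G(2)
    by (auto simp: h_def k_def subsetD)
  have "grad u z = (\<Sum>e\<in>Basis. (k * ((z - x0) \<bullet> e)) *\<^sub>R e)"
    using grad_eq_sum_partials[OF Du[OF zG]] partials by simp
  also have "\<dots> = k *\<^sub>R (\<Sum>e\<in>Basis. ((z - x0) \<bullet> e) *\<^sub>R e)"
    by (simp add: scaleR_sum_right)
  also have "\<dots> = k *\<^sub>R (z - x0)"
    by (simp add: euclidean_representation)
  finally show "norm (grad u z) = 2*A*\<beta>*h powr (-\<beta>-1) * sqrt (r^2 - h)"
    using A \<beta> by (simp add: k_def h_def)
  have "laplacian u z = (\<Sum>e\<in>Basis. D2u z e e)"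
    by (rule laplacian_eq_trace[OF G(1) zG Du D2u[OF zG]])
  also have "\<dots> \<le> (\<Sum>e\<in>Basis. 2*A*\<beta>*(h powr (-\<beta>-1) + 2*(\<beta>+1)*((z - x0) \<bullet> e)^2*h powr (-\<beta>-2)))"
    by (intro sum_mono partials)
  also have "\<dots> = 2*A*\<beta>*(real DIM('a) * h powr (-\<beta>-1)
      + 2*(\<beta>+1)*(\<Sum>e\<in>Basis. ((z - x0) \<bullet> e)^2)*h powr (-\<beta>-2))"
    by (simp add: sum.distrib sum_distrib_left sum_distrib_right algebra_simps)
  also have "(\<Sum>e\<in>Basis. ((z - x0) \<bullet> e)^2) = r^2 - h"
    unfolding h_def power2_norm_eq_inner euclidean_inner[of "z - x0" "z - x0"]
    by (simp add: power2_eq_square)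
  finally show "laplacian u z
      \<le> 2*A*\<beta>*(real DIM('a) * h powr (-\<beta>-1) + 2*(\<beta>+1)*(r^2 - h)*h powr (-\<beta>-2))" .
qed

text \<open>The two summands in the hypothesis \<open>supersolution\<close> are the Laplacian and
  \<open>M |grad w|^q\<close> of the barrier \<open>w\<close> at a point with \<open>r^2 - |y - x0|^2 = h\<close>, so the
  hypothesis says that \<open>w\<close> is a strict supersolution in the ball.\<close>

lemma below_barrier_at_center:
  fixes u :: "'a::euclidean_space \<Rightarrow> real" and Du :: "'a \<Rightarrow> ('a \<Rightarrow>\<^sub>L real)"
    and D2u :: "'a \<Rightarrow> ('a \<Rightarrow>\<^sub>L ('a \<Rightarrow>\<^sub>L real))"
  assumes G: "open G" "cball x0 r \<subseteq> G"
    and r: "r > 0" and A: "A > 0" and \<beta>: "\<beta> > 0" and p: "p > 0"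
    and Du: "\<And>x. x \<in> G \<Longrightarrow> (u has_derivative blinfun_apply (Du x)) (at x)"
    and D2u: "\<And>x. x \<in> G \<Longrightarrow> (Du has_derivative blinfun_apply (D2u x)) (at x)"
    and u0: "u x0 \<ge> 0"
    and pde: "\<And>x. x \<in> G \<Longrightarrow> - laplacian u x + u x powr p - M * norm (grad u x) powr q = 0"
    and supersolution: "\<And>h. 0 < h \<Longrightarrow> h \<le> r^2 \<Longrightarrow>
       2*A*\<beta>*(real DIM('a) * h powr (-\<beta>-1) + 2*(\<beta>+1)*(r^2 - h)*h powr (-\<beta>-2))
       + M*(2*A*\<beta>*h powr (-\<beta>-1) * sqrt (r^2 - h)) powr q < (A * h powr (-\<beta>)) powr p"
  shows "u x0 < A * (r^2) powr (-\<beta>)"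
proof -
  let ?w = "barrier A \<beta> x0 r"
  have u_cont: "continuous_on (cball x0 r) u"
    using G(2) Du by (meson continuous_at_imp_continuous_on has_derivative_continuous subsetD)
  obtain \<rho> z where \<rho>: "0 < \<rho>" "\<rho> < r" and z: "z \<in> ball x0 \<rho>"
    and zmax: "\<And>y. y \<in> cball x0 \<rho> \<Longrightarrow> u y - ?w y \<le> u z - ?w z"
    using exists_interior_max_minus_barrier[OF u_cont u0 r A \<beta>] by blast
  have ball: "ball x0 \<rho> \<subseteq> G" using G(2) \<rho> by auto
  with z have zG: "z \<in> G" by auto
  define h where "h = r^2 - norm (z - x0)^2"
  have "norm (z - x0) < r" using z \<rho> by (simp add: dist_norm norm_minus_commute)
  then have h: "0 < h" "h \<le> r^2" by (auto simp: h_def power_strict_mono)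
  have "u y - ?w y \<le> u z - ?w z" if "y \<in> ball x0 \<rho>" for y
    using zmax that by simp
  note grad_laplacian =
    grad_laplacian_at_barrier_max[OF G(1) ball z less_imp_le[OF \<rho>(2)] A \<beta> Du D2u this]
  have "u z powr p = laplacian u z + M * norm (grad u z) powr q"
    using pde[OF zG] by simp
  also have "\<dots> < (A * h powr (-\<beta>)) powr p"
    using grad_laplacian supersolution[OF h] by (simp add: h_def)
  also have "A * h powr (-\<beta>) = ?w z"
    by (simp add: barrier_def h_def)
  finally have "u z powr p < ?w z powr p" .
  then have "u z < ?w z"
    using powr_mono2[of p "?w z" "u z"] p A by (force simp: barrier_def)
  with zmax[of x0] \<rho> show ?thesis by (simp add: barrier_def)
qed

lemma powr_neg_le_scaled:
  fixes h R a b :: real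
  assumes "0 < h" "h \<le> R" "a \<le> b"
  shows "h powr (-a) \<le> R powr (b - a) * h powr (-b)"
proof -
  have "h powr (-a) = h powr (b - a) * h powr (-b)"
    using assms by (simp add: powr_add[symmetric])
  also have "\<dots> \<le> R powr (b - a) * h powr (-b)"
    using assms by (intro mult_right_mono powr_mono2) auto
  finally show ?thesis .
qed

lemma barrier_scaled_power:
  fixes X R h \<beta> p :: real
  assumes "X > 0" "R > 0" "h > 0"
  shows "((X * R powr \<beta>) * h powr (-\<beta>)) powr p = X powr p * R powr (\<beta>*p) * h powr (-(\<beta>*p))"
  using assms by (simp add: powr_mult powr_powr)

lemma barrier_laplacian_bracket_le:
  fixes N \<beta> R h :: real
  assumes N: "N \<ge> 0" and \<beta>: "\<beta> > 0" and h: "0 < h" "h \<le> R"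
  shows "N * h powr (-\<beta>-1) + 2*(\<beta>+1)*(R - h)*h powr (-\<beta>-2) \<le> (N + 2*\<beta> + 2) * R * h powr (-(\<beta>+2))"
proof -
  have "-\<beta>-1 = 1 + (-\<beta>-2)" by simp
  then have "h powr (-\<beta>-1) = h powr 1 * h powr (-\<beta>-2)"
    by (simp only: powr_add)
  then have "h powr (-\<beta>-1) = h * h powr (-\<beta>-2)"
    using h by simp
  then have "N * h powr (-\<beta>-1) + 2*(\<beta>+1)*(R - h)*h powr (-\<beta>-2)
      \<le> N * (R * h powr (-\<beta>-2)) + 2*(\<beta>+1)*R*h powr (-\<beta>-2)"
    using N \<beta> h by (intro add_mono mult_left_mono mult_right_mono) auto
  also have "\<dots> = (N + 2*\<beta> + 2) * R * h powr (-(\<beta>+2))"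
    by (simp add: algebra_simps)
  finally show ?thesis .
qed

lemma barrier_laplacian_term_le:
  fixes N \<beta> p R X h :: real
  assumes N: "N \<ge> 0" and \<beta>: "\<beta> > 0" "2 \<le> \<beta>*(p-1)"
    and R: "R > 0" and X: "X > 0" and h: "0 < h" "h \<le> R"
    and X_large: "3 * (2*\<beta>*(N + 2*\<beta> + 2)) \<le> X powr (p-1) * R"
  shows "2*(X * R powr \<beta>)*\<beta>*(N * h powr (-\<beta>-1) + 2*(\<beta>+1)*(R - h)*h powr (-\<beta>-2))
           \<le> ((X * R powr \<beta>) * h powr (-\<beta>)) powr p / 3"
proof -
  define K where "K = 2*\<beta>*(N + 2*\<beta> + 2)"
  have K: "K \<ge> 0" using N \<beta> by (simp add: K_def)
  have "2*(X * R powr \<beta>)*\<beta>*(N * h powr (-\<beta>-1) + 2*(\<beta>+1)*(R - h)*h powr (-\<beta>-2))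
      \<le> 2*(X * R powr \<beta>)*\<beta>*((N + 2*\<beta> + 2) * R * h powr (-(\<beta>+2)))"
    using barrier_laplacian_bracket_le[OF N \<beta>(1) h] X R \<beta> by (intro mult_left_mono) auto
  also have "\<dots> = K * X * R powr \<beta> * R * h powr (-(\<beta>+2))"
    by (simp add: K_def)
  also have "\<dots> \<le> K * X * R powr \<beta> * R * (R powr (\<beta>*p - (\<beta>+2)) * h powr (-(\<beta>*p)))"
    using powr_neg_le_scaled[OF h, of "\<beta>+2" "\<beta>*p"] \<beta> K X R
    by (intro mult_left_mono) (auto simp: algebra_simps)
  also have "\<dots> = K * X * R powr (\<beta>*p - 1) * h powr (-(\<beta>*p))"
  proof -
    have "\<beta>*p - 1 = \<beta> + 1 + (\<beta>*p - (\<beta>+2))" by simp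
    then have "R powr (\<beta>*p - 1) = R powr \<beta> * R powr 1 * R powr (\<beta>*p - (\<beta>+2))"
      by (simp only: powr_add)
    then show ?thesis using R by simp
  qed
  also have "\<dots> \<le> X powr (p-1) * R * X * R powr (\<beta>*p - 1) * h powr (-(\<beta>*p)) / 3"
  proof -
    have "3*K * (X * R powr (\<beta>*p - 1) * h powr (-(\<beta>*p)))
        \<le> X powr (p-1) * R * (X * R powr (\<beta>*p - 1) * h powr (-(\<beta>*p)))"
      using X_large X by (intro mult_right_mono) (auto simp: K_def)
    then show ?thesis by (simp add: field_simps)
  qed
  also have "\<dots> = X powr p * R powr (\<beta>*p) * h powr (-(\<beta>*p)) / 3"
    using powr_add[of X "p-1" 1] powr_add[of R 1 "\<beta>*p - 1"] X R by (simp add: mult_ac)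
  also have "\<dots> = ((X * R powr \<beta>) * h powr (-\<beta>)) powr p / 3"
    by (simp add: barrier_scaled_power[OF X R h(1)])
  finally show ?thesis .
qed

lemma barrier_gradient_term_le:
  fixes M q \<beta> p R X h :: real
  assumes M: "M \<ge> 0" and q: "q > 0" and \<beta>: "\<beta> > 0" "q \<le> \<beta>*(p-q)"
    and R: "R > 0" and X: "X > 0" and h: "0 < h" "h \<le> R"
    and X_large: "3 * M * (2*\<beta>) powr q \<le> X powr (p-q) * R powr (q/2)"
  shows "M * (2*(X * R powr \<beta>)*\<beta>*h powr (-\<beta>-1) * sqrt (R - h)) powr q
           \<le> ((X * R powr \<beta>) * h powr (-\<beta>)) powr p / 3"
proof -
  have "sqrt (R - h) \<le> R powr (1/2)"
    using h by (simp add: powr_half_sqrt)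
  then have "2*(X * R powr \<beta>)*\<beta>*h powr (-\<beta>-1) * sqrt (R - h)
      \<le> 2*(X * R powr \<beta>)*\<beta>*h powr (-\<beta>-1) * R powr (1/2)"
    using X \<beta> by (intro mult_left_mono) auto
  also have "\<dots> = (2*\<beta>) * X * R powr (\<beta> + 1/2) * h powr (-(\<beta>+1))"
    by (simp add: powr_add)
  finally have "(2*(X * R powr \<beta>)*\<beta>*h powr (-\<beta>-1) * sqrt (R - h)) powr q
      \<le> ((2*\<beta>) * X * R powr (\<beta> + 1/2) * h powr (-(\<beta>+1))) powr q"
    using q X \<beta> h by (intro powr_mono2) auto
  also have "\<dots> = (2*\<beta>) powr q * X powr q * R powr (\<beta>*q + q/2) * h powr (-((\<beta>+1)*q))"
    using X R h \<beta> by (simp add: powr_mult powr_powr algebra_simps)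
  also have "\<dots> \<le> (2*\<beta>) powr q * X powr q * R powr (\<beta>*q + q/2)
      * (R powr (\<beta>*p - (\<beta>+1)*q) * h powr (-(\<beta>*p)))"
    using powr_neg_le_scaled[OF h, of "(\<beta>+1)*q" "\<beta>*p"] \<beta>
    by (intro mult_left_mono) (auto simp: algebra_simps)
  also have "\<dots> = (2*\<beta>) powr q * X powr q * R powr (\<beta>*p - q/2) * h powr (-(\<beta>*p))"
    using R by (simp add: powr_add[symmetric] algebra_simps)
  finally have "M * (2*(X * R powr \<beta>)*\<beta>*h powr (-\<beta>-1) * sqrt (R - h)) powr q
      \<le> 3 * M * (2*\<beta>) powr q * (X powr q * R powr (\<beta>*p - q/2) * h powr (-(\<beta>*p))) / 3"
    using M by (simp add: mult_left_mono mult_ac)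
  also have "\<dots> \<le> X powr (p-q) * R powr (q/2) * (X powr q * R powr (\<beta>*p - q/2) * h powr (-(\<beta>*p))) / 3"
    using X_large by (intro divide_right_mono mult_right_mono) auto
  also have "\<dots> = X powr p * R powr (\<beta>*p) * h powr (-(\<beta>*p)) / 3"
    using powr_add[of X "p-q" q] powr_add[of R "q/2" "\<beta>*p - q/2"] by (simp add: mult_ac)
  also have "\<dots> = ((X * R powr \<beta>) * h powr (-\<beta>)) powr p / 3"
    by (simp add: barrier_scaled_power[OF X R h(1)])
  finally show ?thesis .
qed

lemma interior_bound:
  fixes u :: "'a::euclidean_space \<Rightarrow> real" and Du :: "'a \<Rightarrow> ('a \<Rightarrow>\<^sub>L real)"
    and D2u :: "'a \<Rightarrow> ('a \<Rightarrow>\<^sub>L ('a \<Rightarrow>\<^sub>L real))"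
  assumes q: "0 < q" "q < p" and \<beta>: "\<beta> > 0" "2 \<le> \<beta>*(p-1)" "q \<le> \<beta>*(p-q)"
    and G: "open G" "cball x0 r \<subseteq> G" and r: "r > 0" and M: "M \<ge> 0" and X: "X > 0"
    and Du: "\<And>x. x \<in> G \<Longrightarrow> (u has_derivative blinfun_apply (Du x)) (at x)"
    and D2u: "\<And>x. x \<in> G \<Longrightarrow> (Du has_derivative blinfun_apply (D2u x)) (at x)"
    and u0: "u x0 \<ge> 0"
    and pde: "\<And>x. x \<in> G \<Longrightarrow> - laplacian u x + u x powr p - M * norm (grad u x) powr q = 0"
    and X_large1: "3 * (2*\<beta>*(real DIM('a) + 2*\<beta> + 2)) \<le> X powr (p-1) * r^2"
    and X_large2: "3 * M * (2*\<beta>) powr q \<le> X powr (p-q) * r powr q"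
  shows "u x0 < X"
proof -
  have r2: "r^2 > 0" using r by simp
  have "(r^2) powr (q/2) = (r powr 2) powr (q/2)"
    using r by (simp add: powr_numeral)
  also have "\<dots> = r powr q"
    by (simp add: powr_powr)
  finally have "(r^2) powr (q/2) = r powr q" .
  with X_large2 have X_large2': "3 * M * (2*\<beta>) powr q \<le> X powr (p-q) * (r^2) powr (q/2)"
    by simp
  have "u x0 < (X * (r^2) powr \<beta>) * (r^2) powr (-\<beta>)"
  proof (rule below_barrier_at_center[OF G r _ \<beta>(1) _ Du D2u u0 pde])
    show "X * (r^2) powr \<beta> > 0" "p > 0" using X r q by auto
    fix h :: real assume h: "0 < h" "h \<le> r^2"
    have "(X * (r^2) powr \<beta> * h powr (-\<beta>)) powr p > 0" using X h r by simp
    then show "2*(X * (r^2) powr \<beta>)*\<beta>*(real DIM('a) * h powr (-\<beta>-1) + 2*(\<beta>+1)*(r^2 - h)*h powr (-\<beta>-2))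
       + M*(2*(X * (r^2) powr \<beta>)*\<beta>*h powr (-\<beta>-1) * sqrt (r^2 - h)) powr q
       < ((X * (r^2) powr \<beta>) * h powr (-\<beta>)) powr p"
      using barrier_laplacian_term_le[OF of_nat_0_le_iff \<beta>(1,2) r2 X h X_large1]
        barrier_gradient_term_le[OF M q(1) \<beta>(1,3) r2 X h X_large2']
      by linarith
  qed
  also have "(X * (r^2) powr \<beta>) * (r^2) powr (-\<beta>) = X"
    using r by (simp add: powr_minus field_simps)
  finally show ?thesis .
qed

lemma powr_root_scaled:
  fixes K t e a :: real
  assumes "K > 0" "t > 0" "e \<noteq> 0"
  shows "(K powr (1/e) * t powr (-a/e)) powr e = K * t powr (-a)"
  using assms by (simp add: powr_mult powr_powr)


lemma laplacian_scale_choice: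
  fixes K d p :: real
  assumes "K > 0" "d > 0" "p > 1"
  shows "((12 * K) powr (1/(p-1)) * d powr (-2/(p-1))) powr (p-1) * (d/2)^2 = 3 * K"
proof -
  have "((12 * K) powr (1/(p-1)) * d powr (-2/(p-1))) powr (p-1) = 12 * K * d powr (-2)"
    using powr_root_scaled[of "12*K" d "p-1" 2] assms by simp
  then show ?thesis
    using assms by (simp add: powr_minus power2_eq_square field_simps)
qed

lemma gradient_scale_choice:
  fixes \<beta> M d p q :: real
  assumes "\<beta> > 0" "M > 0" "d > 0" "q < p"
  shows "((3 * (4*\<beta>) powr q) powr (1/(p-q)) * (M powr (1/(p-q)) * d powr (-q/(p-q)))) powr (p-q)
           * (d/2) powr q = 3 * M * (2*\<beta>) powr q"
proof -
  have "(3 * (4*\<beta>) powr q) powr (1/(p-q)) * (M powr (1/(p-q)) * d powr (-q/(p-q)))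
      = (3 * (4*\<beta>) powr q * M) powr (1/(p-q)) * d powr (-q/(p-q))"
    using assms by (simp add: powr_mult)
  also have "\<dots> powr (p-q) = 3 * (4*\<beta>) powr q * M * d powr (-q)"
    by (rule powr_root_scaled) (use assms in auto)
  finally have "((3 * (4*\<beta>) powr q) powr (1/(p-q)) * (M powr (1/(p-q)) * d powr (-q/(p-q)))) powr (p-q)
      * (d/2) powr q = 3 * M * ((4*\<beta>) powr q * (d powr (-q) * (d/2) powr q))"
    by (simp add: mult_ac)
  moreover have "(4*\<beta>) powr q = 2 powr q * (2*\<beta>) powr q"
    using assms by (simp add: powr_mult[symmetric])
  moreover have "d powr (-q) * (d/2) powr q = 1 / 2 powr q"
    using assms by (simp add: powr_divide powr_minus)
  ultimately show ?thesis by simp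
qed

lemma interior_estimate:
  fixes u :: "'a::euclidean_space \<Rightarrow> real" and Du :: "'a \<Rightarrow> ('a \<Rightarrow>\<^sub>L real)"
    and D2u :: "'a \<Rightarrow> ('a \<Rightarrow>\<^sub>L ('a \<Rightarrow>\<^sub>L real))"
  assumes q: "0 < q" "q < p" and \<beta>: "\<beta> > 0" "2 \<le> \<beta>*(p-1)" "q \<le> \<beta>*(p-q)"
    and G: "open G" "ball x d \<subseteq> G" and d: "d > 0" and M: "M > 0"
    and Du: "\<And>x. x \<in> G \<Longrightarrow> (u has_derivative blinfun_apply (Du x)) (at x)"
    and D2u: "\<And>x. x \<in> G \<Longrightarrow> (Du has_derivative blinfun_apply (D2u x)) (at x)"
    and u0: "u x \<ge> 0"
    and pde: "\<And>x. x \<in> G \<Longrightarrow> - laplacian u x + u x powr p - M * norm (grad u x) powr q = 0"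
  defines "K \<equiv> 2*\<beta>*(real DIM('a) + 2*\<beta> + 2)"
  shows "u x \<le> max ((3 * (4*\<beta>) powr q) powr (1/(p-q)) * (M powr (1/(p-q)) * d powr (-q/(p-q))))
                   ((12 * K) powr (1/(p-1)) * d powr (-2/(p-1)))"
    (is "_ \<le> max ?X2 ?X1")
proof -
  have p: "p > 1" using zero_less_mult_pos[of \<beta> "p-1"] \<beta> by linarith
  have K: "K > 0" using \<beta> by (simp add: K_def add_nonneg_pos)
  have ball: "cball x (d/2) \<subseteq> G" using d G(2) by auto
  define X where "X = max ?X2 ?X1"
  have "?X1 > 0" using K d by simp
  then have X: "X > 0" "?X1 \<le> X" "?X2 \<le> X" by (auto simp: X_def)
  have "3 * K \<le> X powr (p-1) * (d/2)^2"
    unfolding laplacian_scale_choice[OF K d p, symmetric]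
    using X p \<open>?X1 > 0\<close> by (intro mult_right_mono powr_mono2) auto
  moreover have "3 * M * (2*\<beta>) powr q \<le> X powr (p-q) * (d/2) powr q"
    unfolding gradient_scale_choice[OF \<beta>(1) M d q(2), symmetric]
    using X q M d by (intro mult_right_mono powr_mono2) auto
  ultimately have "u x < X"
    using interior_bound[OF q \<beta> G(1) ball _ less_imp_le[OF M] X(1) Du D2u u0 pde] d
    by (simp add: K_def)
  then show ?thesis by (simp add: X_def)
qed

lemma dist_bd_pos_ball_subset:
  fixes G :: "'a::euclidean_space set"
  assumes "open G" "G \<noteq> UNIV" "x \<in> G"
  shows "dist_bd G x > 0" "ball x (dist_bd G x) \<subseteq> G"
proof -
  have "frontier G \<noteq> {}" using frontier_not_empty[of G] assms by auto
  moreover have "x \<notin> frontier G" using assms by (simp add: frontier_def interior_open)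
  ultimately show "dist_bd G x > 0"
    unfolding dist_bd_def by (intro infdist_pos_not_in_closed) auto
  show "ball x (dist_bd G x) \<subseteq> G"
  proof (rule ccontr)
    assume "\<not> ball x (dist_bd G x) \<subseteq> G"
    moreover have "ball x (dist_bd G x) \<inter> G \<noteq> {}"
      using assms(3) \<open>dist_bd G x > 0\<close> by (metis IntI centre_in_ball empty_iff)
    ultimately obtain y where "y \<in> frontier G" "dist x y < infdist x (frontier G)"
      using connected_Int_frontier[OF connected_ball, of x "dist_bd G x" G]
      by (auto simp: dist_bd_def)
    with infdist_le[of y "frontier G" x] show False by simp
  qed
qed

lemma barrier_exponent:
  fixes p q :: real
  assumes "1 < q" "q < p"
  defines "\<beta> \<equiv> max (2/(p-1)) (q/(p-q))"
  shows "\<beta> > 0" "2 \<le> \<beta>*(p-1)" "q \<le> \<beta>*(p-q)"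
proof -
  have "p - 1 > 0" "p - q > 0" "2/(p-1) \<le> \<beta>" "q/(p-q) \<le> \<beta>"
    using assms by (auto simp: \<beta>_def)
  then show "\<beta> > 0" "2 \<le> \<beta>*(p-1)" "q \<le> \<beta>*(p-q)"
    by (auto simp: pos_divide_le_eq intro: less_le_trans[of 0 "2/(p-1)"])
qed

theorem proposition2p1:
  fixes p q :: real
  assumes "1 < q" and "q < p"
  shows "\<exists>c>0. \<forall>(G::'a::euclidean_space set) (M::real) (u::'a \<Rightarrow> real).
     open G \<and> G \<noteq> UNIV \<and> M > 0 \<and> C2_on G u \<and> (\<forall>x\<in>G. u x \<ge> 0) \<and>
     (\<forall>x\<in>G. - laplacian u x + u x powr p - M * norm (grad u x) powr q = 0) \<longrightarrow>
     (\<forall>x\<in>G. u x \<le> c * max (M powr (1 / (p - q)) * dist_bd G x powr (- q / (p - q)))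
                              (dist_bd G x powr (- 2 / (p - 1))))"
proof -
  define \<beta> where "\<beta> = max (2/(p-1)) (q/(p-q))"
  define C1 where "C1 = (12 * (2*\<beta>*(real DIM('a) + 2*\<beta> + 2))) powr (1/(p-1))"
  define C2 where "C2 = (3 * (4*\<beta>) powr q) powr (1/(p-q))"
  have \<beta>: "\<beta> > 0" "2 \<le> \<beta>*(p-1)" "q \<le> \<beta>*(p-q)"
    using barrier_exponent[OF assms] by (simp_all add: \<beta>_def)
  have "real DIM('a) + 2*\<beta> + 2 > 0" using \<beta> by (intro add_nonneg_pos) auto
  then have C: "C1 > 0" "C2 \<ge> 0" using \<beta> by (simp_all add: C1_def C2_def)
  show ?thesis
  proof (intro exI[of _ "C1 + C2"] conjI allI impI ballI)
    show "C1 + C2 > 0" using C by simp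
    fix G :: "'a set" and M u x
    assume H: "open G \<and> G \<noteq> UNIV \<and> M > 0 \<and> C2_on G u \<and> (\<forall>x\<in>G. u x \<ge> 0) \<and>
      (\<forall>x\<in>G. - laplacian u x + u x powr p - M * norm (grad u x) powr q = 0)" and x: "x \<in> G"
    then obtain Du D2u where "\<forall>x\<in>G. (u has_derivative blinfun_apply (Du x)) (at x)"
      "\<forall>x\<in>G. (Du has_derivative blinfun_apply (D2u x)) (at x)"
      unfolding C2_on_def by blast
    with H x dist_bd_pos_ball_subset[of G x] assms
    have "u x \<le> max (C2 * (M powr (1/(p-q)) * dist_bd G x powr (-q/(p-q))))
                     (C1 * dist_bd G x powr (-2/(p-1)))"
      unfolding C1_def C2_def by (intro interior_estimate[OF _ _ \<beta>]) auto
    also have "\<dots> \<le> (C1 + C2) * max (M powr (1/(p-q)) * dist_bd G x powr (-q/(p-q)))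
                                      (dist_bd G x powr (-2/(p-1)))"
      using C by (intro max.boundedI mult_mono) auto
    finally show "u x \<le> (C1 + C2) * max (M powr (1 / (p - q)) * dist_bd G x powr (- q / (p - q)))
                              (dist_bd G x powr (- 2 / (p - 1)))" .
  qed
qed

end
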